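(* Let $P$ be a $d$-dimensional convex polytope and $O$ an acyclic orientation of its graph $G_P$. Then $f^O=\sum_{i=0}^d f_i(P)$ if and only if all of the following hold: (1) each nonempty face $F$ of $P$ has a unique sink (of $G_F$ with respect to $O$); (2) each nonempty face $F$ of $P$ is simple at its sink, i.e. the sink has degree $\dim F$ in $G_F$; (3) for each vertex $v$ of $P$, there is a face of $P$ which has $v$ as its sink and contains every edge of $P$ oriented towards $v$.
   Context: The graph $G_P=(V_P,E_P)$ of a polytope $P$ has vertex set the vertices of $P$, with two vertices adjacent iff some $1$-dimensional face of $P$ contains both; for a face $F$, $G_F$ is its graph, oriented by restricting $O$. $f_i(P)$ is the number of $i$-dimensional faces of $P$. For an orientation $O$ of a graph $G=(V,E)$, $f^O:=\sum_{v\in V}2^{\operatorname{indeg}(v)}$. A sink of a graph with respect to an orientation is a vertex all of whose incident edges are oriented towards it. *)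

theory Defs
  imports "HOL-Analysis.Analysis"
begin

definition poly_vertices :: "'a::euclidean_space set \<Rightarrow> 'a set" where
  "poly_vertices F = {v. v extreme_point_of F}"

definition poly_adj :: "'a::euclidean_space set \<Rightarrow> 'a \<Rightarrow> 'a \<Rightarrow> bool" where
  "poly_adj F u v \<longleftrightarrow> u \<in> poly_vertices F \<and> v \<in> poly_vertices F \<and> u \<noteq> v \<and>
     (\<exists>e. e face_of F \<and> aff_dim e = 1 \<and> u \<in> e \<and> v \<in> e)"

definition f_num :: "nat \<Rightarrow> 'a::euclidean_space set \<Rightarrow> nat" where
  "f_num i P = card {F. F face_of P \<and> aff_dim F = int i}"

text \<open>Ori (a relation, Ori u v meaning the edge uv is oriented from u to v) is an
  orientation of the graph G_P.\<close>
definition is_orientation :: "'a::euclidean_space set \<Rightarrow> ('a \<Rightarrow> 'a \<Rightarrow> bool) \<Rightarrow> bool" where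
  "is_orientation P Ori \<longleftrightarrow>
     (\<forall>u v. Ori u v \<longrightarrow> poly_adj P u v) \<and>
     (\<forall>u v. poly_adj P u v \<longrightarrow> (Ori u v \<or> Ori v u)) \<and>
     (\<forall>u v. \<not> (Ori u v \<and> Ori v u))"

definition acyclic_orientation :: "('a \<Rightarrow> 'a \<Rightarrow> bool) \<Rightarrow> bool" where
  "acyclic_orientation Ori \<longleftrightarrow> (\<forall>v. \<not> Ori\<^sup>+\<^sup>+ v v)"

definition indeg :: "('a \<Rightarrow> 'a \<Rightarrow> bool) \<Rightarrow> 'a \<Rightarrow> nat" where
  "indeg Ori v = card {u. Ori u v}"

definition fO :: "'a::euclidean_space set \<Rightarrow> ('a \<Rightarrow> 'a \<Rightarrow> bool) \<Rightarrow> nat" where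
  "fO P Ori = (\<Sum>v\<in>poly_vertices P. 2 ^ indeg Ori v)"

definition is_sink :: "'a::euclidean_space set \<Rightarrow> ('a \<Rightarrow> 'a \<Rightarrow> bool) \<Rightarrow> 'a \<Rightarrow> bool" where
  "is_sink F Ori v \<longleftrightarrow> v \<in> poly_vertices F \<and> (\<forall>u. poly_adj F u v \<longrightarrow> Ori u v)"

definition degree_in :: "'a::euclidean_space set \<Rightarrow> 'a \<Rightarrow> nat" where
  "degree_in F v = card {u. poly_adj F u v}"

end

theory Submission
  imports Defs
begin

text \<open>By acyclicity every nonempty face F has a sink s, and F is determined by s together
  with its neighbours N_F(s) in G_F, since these span the affine hull of F. So F \<mapsto> (s, N_F(s))
  injects the nonempty faces into the pairs (v, S) with S a set of in-neighbours of v, of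
  which there are exactly f^O; equality holds iff this map is onto. If it is onto, a second
  sink of F would be the chosen sink of a face with the same pair, i.e. of F itself (1); a
  neighbour u of a sink that is affinely dependent on the others would lie in the face
  realising the other neighbours (2); and the face realising all in-neighbours of v gives (3).
  Conversely, at a simple vertex every set of neighbours is realised by a face through it
  (repeatedly pass to the facet through v avoiding one neighbour), so (1)-(3) give
  surjectivity.\<close>

abbreviation nbrs :: "'a::euclidean_space set \<Rightarrow> 'a \<Rightarrow> 'a set" where
  "nbrs F v \<equiv> {u. poly_adj F u v}"

lemma poly_vertices_subset: "poly_vertices F \<subseteq> F"
  unfolding poly_vertices_def extreme_point_of_def by blast

lemma poly_vertices_face_of: "H face_of F \<Longrightarrow> poly_vertices H = poly_vertices F \<inter> H"
  unfolding poly_vertices_def by (auto simp: extreme_point_of_face)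

lemma finite_poly_vertices: "polytope F \<Longrightarrow> finite (poly_vertices F)"
  unfolding poly_vertices_def
  using finite_polyhedron_extreme_points polytope_imp_polyhedron by blast

lemma nbrs_subset: "nbrs F v \<subseteq> poly_vertices F - {v}"
  unfolding poly_adj_def by blast

lemma vertex_notin_nbrs: "v \<notin> nbrs F v"
  unfolding poly_adj_def by blast

lemma finite_nbrs: "polytope F \<Longrightarrow> finite (nbrs F v)"
  using finite_subset[OF nbrs_subset] finite_poly_vertices by blast

lemma poly_adj_face_of:
  assumes "H face_of F"
  shows "poly_adj H u v \<longleftrightarrow> poly_adj F u v \<and> u \<in> H \<and> v \<in> H"
proof
  assume "poly_adj H u v"
  then show "poly_adj F u v \<and> u \<in> H \<and> v \<in> H"
    using assms poly_vertices_face_of face_of_trans unfolding poly_adj_def by blast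
next
  assume adj: "poly_adj F u v \<and> u \<in> H \<and> v \<in> H"
  then obtain e where e: "e face_of F" "aff_dim e = 1" "u \<in> e" "v \<in> e" and "u \<noteq> v"
    unfolding poly_adj_def by blast
  have "e \<inter> H face_of e"
    using face_of_Int[OF e(1) assms] face_of_subset e(1) face_of_imp_subset by blast
  moreover have "1 \<le> aff_dim (e \<inter> H)"
    using aff_dim_subset[of "{u, v}" "e \<inter> H"] e adj \<open>u \<noteq> v\<close> by simp
  ultimately have "e \<inter> H = e"
    using face_of_aff_dim_lt[OF face_of_imp_convex[OF e(1)]] e(2) by fastforce
  then have "e face_of H"
    using face_of_subset[OF e(1) _ face_of_imp_subset[OF assms]] by blast
  then show "poly_adj H u v"
    using adj e poly_vertices_face_of[OF assms] unfolding poly_adj_def by blast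
qed

lemma subset_affine_hull_of_aff_dim_le:
  fixes S T :: "'a::euclidean_space set"
  assumes "S \<subseteq> affine hull A" "S \<subseteq> T" "aff_dim T \<le> aff_dim S"
  shows "T \<subseteq> affine hull A"
proof -
  have "affine hull T = affine hull S"
    using aff_dim_eq_full_gen[OF assms(2)] aff_dim_subset[OF assms(2)] assms(3) by simp
  also have "\<dots> \<subseteq> affine hull A"
    using assms(1) by (metis hull_hull hull_mono)
  finally show ?thesis using hull_subset[of T affine] by blast
qed

lemma polytope_aff_dim_1_adj_vertex:
  fixes F :: "'a::euclidean_space set"
  assumes "polytope F" "aff_dim F = 1" "v \<in> poly_vertices F"
  obtains w where "poly_adj F w v" "F \<subseteq> affine hull {v, w}"
proof -
  have F: "F = convex hull poly_vertices F"
    using Krein_Milman_Minkowski polytope_imp_compact polytope_imp_convex assms(1)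
    unfolding poly_vertices_def by blast
  have "poly_vertices F \<noteq> {v}"
  proof
    assume "poly_vertices F = {v}"
    then have "F = {v}" using F by simp
    then show False using assms(2) by simp
  qed
  then obtain w where w: "w \<in> poly_vertices F" "w \<noteq> v"
    using assms(3) by blast
  then have vw: "{v, w} \<subseteq> F"
    using assms(3) poly_vertices_subset by blast
  have "poly_adj F w v"
    unfolding poly_adj_def
    using w vw assms face_of_refl polytope_imp_convex by blast
  moreover have "F \<subseteq> affine hull {v, w}"
    using subset_affine_hull_of_aff_dim_le[OF hull_subset vw] w(2) assms(2) by simp
  ultimately show thesis using that by blast
qed

lemma vertex_eq_Inter_facets:
  fixes F :: "'a::euclidean_space set"
  assumes "polytope F" "v \<in> poly_vertices F" "F \<noteq> {v}"
  shows "{v} = \<Inter>{H. H facet_of F \<and> v \<in> H}"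
proof -
  have "{v} face_of F"
    using assms(2) face_of_singleton unfolding poly_vertices_def by blast
  from face_of_polyhedron[OF polytope_imp_polyhedron[OF assms(1)] this] assms(3)
  show ?thesis by simp
qed

lemma two_facets_through_vertex:
  fixes F :: "'a::euclidean_space set"
  assumes "polytope F" "v \<in> poly_vertices F" "2 \<le> aff_dim F"
  obtains H1 H2 where "H1 facet_of F" "H2 facet_of F" "v \<in> H1" "v \<in> H2" "H1 \<noteq> H2"
proof -
  have "F \<noteq> {v}" using assms(3) by auto
  moreover have "{v} face_of F"
    using assms(2) face_of_singleton unfolding poly_vertices_def by blast
  ultimately obtain H1 where H1: "H1 facet_of F" "v \<in> H1"
    using face_of_polyhedron_subset_facet polytope_imp_polyhedron assms(1) by blast
  have "H1 \<noteq> {v}" using H1(1) assms(3) by (auto simp: facet_of_def)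
  then obtain x where "x \<in> H1" "x \<noteq> v" using H1(2) by blast
  then obtain H2 where "H2 facet_of F" "v \<in> H2" "x \<notin> H2"
    using vertex_eq_Inter_facets[OF assms(1,2) \<open>F \<noteq> {v}\<close>] by blast
  then show thesis using that H1 \<open>x \<in> H1\<close> by blast
qed

lemma subset_affine_hull_Un_facets:
  fixes F :: "'a::euclidean_space set"
  assumes "convex F" "H1 facet_of F" "H2 facet_of F" "H1 \<noteq> H2"
  shows "F \<subseteq> affine hull (H1 \<union> H2)"
proof -
  have f1: "H1 face_of F" "aff_dim H1 = aff_dim F - 1"
    and f2: "H2 face_of F" "aff_dim H2 = aff_dim F - 1"
    using assms(2,3) unfolding facet_of_def by auto
  have "\<not> H2 \<subseteq> affine hull H1"
  proof
    assume "H2 \<subseteq> affine hull H1"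
    then have "H2 \<subseteq> H1"
      using face_of_imp_eq_affine_Int[OF assms(1) f1(1)] face_of_imp_subset[OF f2(1)] by blast
    then have "H2 face_of H1"
      using face_of_subset[OF f2(1) _ face_of_imp_subset[OF f1(1)]] by blast
    then have "aff_dim H2 < aff_dim H1"
      using face_of_aff_dim_lt[OF face_of_imp_convex[OF f1(1)]] assms(4) by blast
    then show False using f1(2) f2(2) by linarith
  qed
  then obtain x where x: "x \<in> H2" "x \<notin> affine hull H1" by blast
  have "aff_dim (insert x H1) = aff_dim H1 + 1"
    using aff_dim_insert[of x H1] x(2) by simp
  then have "aff_dim F \<le> aff_dim (insert x H1)" using f1(2) by linarith
  moreover have "insert x H1 \<subseteq> F"
    using x(1) face_of_imp_subset[OF f1(1)] face_of_imp_subset[OF f2(1)] by blast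
  moreover have "insert x H1 \<subseteq> affine hull (H1 \<union> H2)"
    using x(1) hull_subset[of "H1 \<union> H2" affine] by blast
  ultimately show ?thesis
    using subset_affine_hull_of_aff_dim_le by blast
qed

lemma affine_hull_insert_nbrs_face_of_mono:
  "H face_of F \<Longrightarrow> affine hull (insert v (nbrs H v)) \<subseteq> affine hull (insert v (nbrs F v))"
  using poly_adj_face_of by (intro hull_mono) blast

lemma subset_affine_hull_vertex_nbrs:
  fixes F :: "'a::euclidean_space set"
  assumes "polytope F" "v \<in> poly_vertices F"
  shows "F \<subseteq> affine hull (insert v (nbrs F v))"
proof -
  have "F \<noteq> {}" using assms(2) poly_vertices_subset by blast
  then obtain n where "aff_dim F = int n"
    using aff_dim_negative_iff nonneg_int_cases by (metis linorder_not_le)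
  then show ?thesis
    using assms
  proof (induction n arbitrary: F rule: less_induct)
    case (less n F)
    consider "n = 0" | "n = 1" | "2 \<le> n" by linarith
    then show ?case
    proof cases
      case 1
      then obtain a where "F = {a}" using aff_dim_eq_0 less.prems(1) by auto
      then have "F = {v}" using less.prems(3) poly_vertices_subset by blast
      then show ?thesis using hull_subset[of "insert v (nbrs F v)"] by blast
    next
      case 2
      then obtain w where "poly_adj F w v" "F \<subseteq> affine hull {v, w}"
        using polytope_aff_dim_1_adj_vertex[OF less.prems(2) _ less.prems(3)] less.prems(1) by auto
      moreover have "affine hull {v, w} \<subseteq> affine hull (insert v (nbrs F v))"
        using \<open>poly_adj F w v\<close> by (intro hull_mono) blast
      ultimately show ?thesis by blast
    next
      case 3
      have "2 \<le> aff_dim F" using less.prems(1) 3 by simp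
      then obtain H1 H2 where H: "H1 facet_of F" "H2 facet_of F" "v \<in> H1" "v \<in> H2" "H1 \<noteq> H2"
        using two_facets_through_vertex[OF less.prems(2,3)] by blast
      have "H \<subseteq> affine hull (insert v (nbrs F v))" if H: "H facet_of F" "v \<in> H" for H
      proof -
        have HF: "H face_of F" using H(1) by (simp add: facet_of_def)
        have "aff_dim H = int (n - 1)"
          using H(1) less.prems(1) 3 by (simp add: facet_of_def)
        moreover have "polytope H" using HF face_of_polytope_polytope less.prems(2) by blast
        moreover have "v \<in> poly_vertices H"
          using poly_vertices_face_of[OF HF] less.prems(3) H(2) by blast
        ultimately have "H \<subseteq> affine hull (insert v (nbrs H v))"
          using less.IH[of "n - 1"] 3 by simp
        then show ?thesis using affine_hull_insert_nbrs_face_of_mono[OF HF] by blast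
      qed
      then have "affine hull (H1 \<union> H2) \<subseteq> affine hull (insert v (nbrs F v))"
        using H by (simp add: hull_minimal)
      then show ?thesis
        using subset_affine_hull_Un_facets[OF _ H(1,2,5)] polytope_imp_convex[OF less.prems(2)]
        by blast
    qed
  qed
qed

lemma affine_hull_vertex_nbrs:
  fixes F :: "'a::euclidean_space set"
  assumes "polytope F" "v \<in> poly_vertices F"
  shows "affine hull F = affine hull (insert v (nbrs F v))"
proof (rule subset_antisym)
  show "affine hull F \<subseteq> affine hull (insert v (nbrs F v))"
    using subset_affine_hull_vertex_nbrs[OF assms] by (simp add: hull_minimal)
  have "insert v (nbrs F v) \<subseteq> F"
    using nbrs_subset poly_vertices_subset assms(2) by blast
  then show "affine hull (insert v (nbrs F v)) \<subseteq> affine hull F"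
    by (rule hull_mono)
qed

lemma aff_dim_le_card_nbrs:
  fixes F :: "'a::euclidean_space set"
  assumes "polytope F" "v \<in> poly_vertices F"
  shows "aff_dim F \<le> int (card (nbrs F v))"
proof -
  have "aff_dim F = aff_dim (insert v (nbrs F v))"
    using affine_hull_vertex_nbrs[OF assms] aff_dim_affine_hull by metis
  also have "\<dots> \<le> int (card (insert v (nbrs F v))) - 1"
    using aff_dim_le_card finite_nbrs[OF assms(1)] by blast
  also have "\<dots> = int (card (nbrs F v))"
    by (simp add: card_insert_disjoint[OF finite_nbrs[OF assms(1)] vertex_notin_nbrs])
  finally show ?thesis .
qed

lemma card_nbrs_eq_aff_dim_if_affine_independent:
  fixes F :: "'a::euclidean_space set"
  assumes "polytope F" "v \<in> poly_vertices F" "\<not> affine_dependent (insert v (nbrs F v))"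
  shows "int (card (nbrs F v)) = aff_dim F"
proof -
  have "int (card (nbrs F v)) = int (card (insert v (nbrs F v))) - 1"
    by (simp add: card_insert_disjoint[OF finite_nbrs[OF assms(1)] vertex_notin_nbrs])
  also have "\<dots> = aff_dim (insert v (nbrs F v))"
    using assms(3) affine_independent_iff_card by metis
  also have "\<dots> = aff_dim F"
    using affine_hull_vertex_nbrs[OF assms(1,2)] aff_dim_affine_hull by metis
  finally show ?thesis .
qed

lemma face_of_eq_if_vertex_nbrs_eq:
  fixes P :: "'a::euclidean_space set"
  assumes "polytope P" "F face_of P" "G face_of P"
    "v \<in> poly_vertices F" "v \<in> poly_vertices G" "nbrs F v = nbrs G v"
  shows "F = G"
proof -
  have "affine hull F = affine hull G"
    using affine_hull_vertex_nbrs assms face_of_polytope_polytope by metis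
  then show ?thesis
    using face_of_imp_eq_affine_Int[OF polytope_imp_convex[OF assms(1)]] assms(2,3) by metis
qed

lemma facet_through_simple_vertex_avoiding:
  fixes F :: "'a::euclidean_space set"
  assumes "polytope F" "v \<in> poly_vertices F" "int (card (nbrs F v)) = aff_dim F"
    and "u \<in> nbrs F v"
  obtains H where "H facet_of F" "v \<in> H" "nbrs H v = nbrs F v - {u}"
proof -
  have "u \<noteq> v" "u \<in> F" using assms(4) nbrs_subset poly_vertices_subset by blast+
  then have "F \<noteq> {v}" by blast
  then obtain H where H: "H facet_of F" "v \<in> H" "u \<notin> H"
    using vertex_eq_Inter_facets[OF assms(1,2)] \<open>u \<noteq> v\<close> by blast
  have HF: "H face_of F" and dimH: "aff_dim H = aff_dim F - 1"
    using H(1) by (auto simp: facet_of_def)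
  have "polytope H" using HF face_of_polytope_polytope assms(1) by blast
  moreover have "v \<in> poly_vertices H" using poly_vertices_face_of[OF HF] assms(2) H(2) by blast
  ultimately have "aff_dim H \<le> int (card (nbrs H v))" by (rule aff_dim_le_card_nbrs)
  moreover have fin: "finite (nbrs F v - {u})" using finite_nbrs[OF assms(1)] by blast
  moreover have sub: "nbrs H v \<subseteq> nbrs F v - {u}" using poly_adj_face_of[OF HF] H(3) by blast
  moreover have "card (nbrs F v) = Suc (card (nbrs F v - {u}))"
    using card_Suc_Diff1[OF finite_nbrs[OF assms(1)] assms(4)] by simp
  then have "int (card (nbrs F v - {u})) = aff_dim H"
    using assms(3) dimH by simp
  ultimately have "nbrs H v = nbrs F v - {u}"
    using card_subset_eq[OF fin sub] card_mono[OF fin sub] by linarith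
  then show thesis using that H by blast
qed

lemma simple_vertex_face_with_nbrs:
  fixes F :: "'a::euclidean_space set"
  assumes "polytope F" "v \<in> poly_vertices F" "int (card (nbrs F v)) = aff_dim F"
    and "S \<subseteq> nbrs F v"
  obtains G where "G face_of F" "v \<in> G" "nbrs G v = S"
proof -
  have "\<exists>G. G face_of F \<and> v \<in> G \<and> nbrs G v = S"
    if "polytope F" "v \<in> poly_vertices F" "int (card (nbrs F v)) = aff_dim F"
      "S \<subseteq> nbrs F v" "card (nbrs F v - S) = n" for F n
    using that
  proof (induction n arbitrary: F)
    case 0
    then have "nbrs F v - S = {}" using finite_nbrs[OF 0(1)] by simp
    then have "nbrs F v = S" using 0(4) by blast
    then show ?case
      using 0 poly_vertices_subset face_of_refl polytope_imp_convex by blast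
  next
    case (Suc n F)
    have "nbrs F v - S \<noteq> {}" using Suc.prems(5) by force
    then obtain u where u: "u \<in> nbrs F v" "u \<notin> S" by blast
    obtain H where H: "H facet_of F" "v \<in> H" "nbrs H v = nbrs F v - {u}"
      using facet_through_simple_vertex_avoiding[OF Suc.prems(1-3) u(1)] by blast
    have HF: "H face_of F" using H(1) by (simp add: facet_of_def)
    have "polytope H" using HF face_of_polytope_polytope Suc.prems(1) by blast
    moreover have "v \<in> poly_vertices H"
      using poly_vertices_face_of[OF HF] Suc.prems(2) H(2) by blast
    moreover have "card (nbrs F v) = Suc (card (nbrs H v))"
      using card_Suc_Diff1[OF finite_nbrs[OF Suc.prems(1)] u(1)] H(3) by simp
    then have "int (card (nbrs H v)) = aff_dim H"
      using H(1) Suc.prems(3) by (simp add: facet_of_def)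
    moreover have "S \<subseteq> nbrs H v" using H(3) Suc.prems(4) u(2) by blast
    moreover have "nbrs H v - S = (nbrs F v - S) - {u}" using H(3) by blast
    then have "card (nbrs H v - S) = n"
      using Suc.prems(5) u by simp
    ultimately obtain G where "G face_of H" "v \<in> G" "nbrs G v = S"
      using Suc.IH by blast
    then show ?case using face_of_trans HF by blast
  qed
  then show thesis using that assms by blast
qed

lemma affine_dependent_insertE:
  assumes "affine_dependent (insert v N)" "v \<notin> N"
  obtains u where "u \<in> N" "u \<in> affine hull (insert v (N - {u}))"
proof -
  have "dependent ((\<lambda>x. - v + x) ` N)"
    using affine_dependent_iff_dependent[OF assms(2)] assms(1) by simp
  then obtain a where a: "a \<in> (\<lambda>x. - v + x) ` N" "a \<in> span ((\<lambda>x. - v + x) ` N - {a})"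
    unfolding dependent_def by blast
  then obtain u where u: "u \<in> N" "a = - v + u" by blast
  have "(\<lambda>x. - v + x) ` N - {a} = (\<lambda>x. - v + x) ` (N - {u})" using u by auto
  then have "u \<in> (\<lambda>x. v + x) ` span ((\<lambda>x. - v + x) ` (N - {u}))"
    using a(2) u(2) by (intro image_eqI[of _ _ a]) auto
  then have "u \<in> affine hull (insert v (N - {u}))"
    by (simp add: affine_hull_insert_span_gen)
  then show thesis using that u(1) by blast
qed

lemma poly_adj_face_of_if_in_affine_hull:
  fixes P :: "'a::euclidean_space set"
  assumes "convex P" "G face_of P" "v \<in> G" "poly_adj P u v" "u \<in> affine hull G"
  shows "poly_adj G u v"
proof -
  have "u \<in> P" using assms(4) nbrs_subset poly_vertices_subset by blast
  then have "u \<in> G" using face_of_imp_eq_affine_Int[OF assms(1,2)] assms(5) by blast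
  then show ?thesis using poly_adj_face_of[OF assms(2)] assms(3,4) by blast
qed

lemma sum_f_num_eq_card_nonempty_faces:
  fixes P :: "'a::euclidean_space set"
  assumes "polytope P" "aff_dim P = int d"
  shows "(\<Sum>i=0..d. f_num i P) = card {F. F face_of P \<and> F \<noteq> {}}"
proof -
  have faces: "{F. F face_of P \<and> F \<noteq> {}} = (\<Union>i\<in>{0..d}. {F. F face_of P \<and> aff_dim F = int i})"
  proof (intro set_eqI iffI)
    fix F assume F: "F \<in> {F. F face_of P \<and> F \<noteq> {}}"
    then have "0 \<le> aff_dim F"
      using aff_dim_negative_iff[of F] by (simp add: not_less[symmetric])
    moreover have "aff_dim F \<le> int d"
      using F aff_dim_subset[OF face_of_imp_subset] assms(2) by fastforce
    ultimately show "F \<in> (\<Union>i\<in>{0..d}. {F. F face_of P \<and> aff_dim F = int i})"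
      using F by (intro UN_I[of "nat (aff_dim F)"]) auto
  qed auto
  have "card {F. F face_of P \<and> F \<noteq> {}} =
      (\<Sum>i=0..d. card {F. F face_of P \<and> aff_dim F = int i})"
    unfolding faces
    by (rule card_UN_disjoint) (auto intro: finite_subset[OF _ finite_polytope_faces[OF assms(1)]])
  then show ?thesis by (simp add: f_num_def)
qed

locale oriented_polytope =
  fixes P :: "'a::euclidean_space set" and Ori :: "'a \<Rightarrow> 'a \<Rightarrow> bool"
  assumes polytope: "polytope P"
    and orientation: "is_orientation P Ori"
    and acyclic: "acyclic_orientation Ori"
begin

definition nonempty_faces :: "'a set set" where
  "nonempty_faces = {F. F face_of P \<and> F \<noteq> {}}"

definition in_nbrs :: "'a \<Rightarrow> 'a set" where
  "in_nbrs v = {u. Ori u v}"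

definition sink :: "'a set \<Rightarrow> 'a" where
  "sink F = (SOME v. is_sink F Ori v)"

definition sink_signature :: "'a set \<Rightarrow> 'a \<times> 'a set" where
  "sink_signature F = (sink F, nbrs F (sink F))"

definition signatures :: "('a \<times> 'a set) set" where
  "signatures = (SIGMA v:poly_vertices P. Pow (in_nbrs v))"

lemma poly_adj_if_in_nbrs: "u \<in> in_nbrs v \<Longrightarrow> poly_adj P u v"
  using orientation unfolding in_nbrs_def is_orientation_def by blast

lemma nbrs_subset_in_nbrs_if_sink: "is_sink F Ori v \<Longrightarrow> nbrs F v \<subseteq> in_nbrs v"
  unfolding is_sink_def in_nbrs_def by blast

lemma face_of_if_nonempty_faces: "F \<in> nonempty_faces \<Longrightarrow> F face_of P"
  unfolding nonempty_faces_def by blast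

lemma is_sink_in_poly_vertices: "F face_of P \<Longrightarrow> is_sink F Ori v \<Longrightarrow> v \<in> poly_vertices P"
  using poly_vertices_face_of unfolding is_sink_def by blast

lemma finite_in_nbrs: "finite (in_nbrs v)"
  using finite_subset[OF _ finite_poly_vertices[OF polytope]] poly_adj_if_in_nbrs
  unfolding poly_adj_def by blast

lemma finite_signatures: "finite signatures"
  unfolding signatures_def
  using finite_poly_vertices[OF polytope] finite_in_nbrs by blast

lemma card_signatures: "card signatures = fO P Ori"
  unfolding signatures_def fO_def indeg_def
  using finite_in_nbrs
  by (subst card_SigmaI) (auto simp: finite_poly_vertices[OF polytope] card_Pow in_nbrs_def)

lemma face_has_sink:
  assumes "F face_of P" "F \<noteq> {}"
  shows "\<exists>v. is_sink F Ori v"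
proof -
  have pF: "polytope F" using assms face_of_polytope_polytope polytope by blast
  obtain x where x: "x \<in> poly_vertices F"
    using extreme_point_exists_convex[OF polytope_imp_compact[OF pF] polytope_imp_convex[OF pF] assms(2)]
    unfolding poly_vertices_def by blast
  define r where "r = {(y, z). y \<in> poly_vertices F \<and> z \<in> poly_vertices F \<and> Ori z y}"
  have "finite r"
    using finite_subset[of r "poly_vertices F \<times> poly_vertices F"] finite_poly_vertices[OF pF]
    unfolding r_def by blast
  moreover have "Ori\<^sup>+\<^sup>+ z y" if "(y, z) \<in> r\<^sup>+" for y z
    using that by (induction rule: trancl_induct) (auto simp: r_def intro: tranclp_trans)
  then have "acyclic r"
    using acyclic unfolding acyclic_def acyclic_orientation_def by blast
  ultimately have "wf r" by (rule finite_acyclic_wf)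
  \<comment> \<open>an r-minimal vertex has no edge of G_F leaving it\<close>
  then obtain z where z: "z \<in> poly_vertices F" "\<And>y. (y, z) \<in> r \<Longrightarrow> y \<notin> poly_vertices F"
    using wfE_min[of r x "poly_vertices F"] x by blast
  have "Ori u z" if "poly_adj F u z" for u
  proof -
    have "poly_adj P u z" using that poly_adj_face_of[OF assms(1)] by blast
    then have "Ori u z \<or> Ori z u" using orientation unfolding is_orientation_def by blast
    moreover have "u \<in> poly_vertices F" using that unfolding poly_adj_def by blast
    ultimately show "Ori u z" using z unfolding r_def by blast
  qed
  then show ?thesis using z(1) unfolding is_sink_def by blast
qed

lemma is_sink_sink: "F \<in> nonempty_faces \<Longrightarrow> is_sink F Ori (sink F)"
  unfolding sink_def nonempty_faces_def using face_has_sink by (auto intro: someI_ex)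

lemma sink_in_poly_vertices: "F \<in> nonempty_faces \<Longrightarrow> sink F \<in> poly_vertices F"
  using is_sink_sink unfolding is_sink_def by blast

lemma sink_signature_in_signatures: "sink_signature ` nonempty_faces \<subseteq> signatures"
proof (rule image_subsetI)
  fix F assume F: "F \<in> nonempty_faces"
  then have "sink F \<in> poly_vertices P"
    using sink_in_poly_vertices poly_vertices_face_of unfolding nonempty_faces_def by blast
  then show "sink_signature F \<in> signatures"
    using nbrs_subset_in_nbrs_if_sink[OF is_sink_sink[OF F]]
    unfolding sink_signature_def signatures_def by blast
qed

lemma inj_on_sink_signature: "inj_on sink_signature nonempty_faces"
proof
  fix F G assume F: "F \<in> nonempty_faces" and G: "G \<in> nonempty_faces"
    and eq: "sink_signature F = sink_signature G"
  then have "sink F = sink G" "nbrs F (sink F) = nbrs G (sink F)"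
    unfolding sink_signature_def by auto
  moreover have "F face_of P" "G face_of P"
    using F G unfolding nonempty_faces_def by auto
  ultimately show "F = G"
    using face_of_eq_if_vertex_nbrs_eq[OF polytope] sink_in_poly_vertices[OF F]
      sink_in_poly_vertices[OF G] by metis
qed

lemma fO_eq_card_nonempty_faces_iff:
  "fO P Ori = card nonempty_faces \<longleftrightarrow> sink_signature ` nonempty_faces = signatures"
proof -
  have "card (sink_signature ` nonempty_faces) = card nonempty_faces"
    by (rule card_image[OF inj_on_sink_signature])
  then show ?thesis
    using card_subset_eq[OF finite_signatures sink_signature_in_signatures] card_signatures
    by metis
qed

context
  assumes surj: "sink_signature ` nonempty_faces = signatures"
begin

lemma sink_signature_surjD:
  assumes "v \<in> poly_vertices P" "S \<subseteq> in_nbrs v"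
  obtains G where "G \<in> nonempty_faces" "sink G = v" "nbrs G v = S"
proof -
  have "(v, S) \<in> sink_signature ` nonempty_faces"
    using surj assms unfolding signatures_def by blast
  then show thesis using that unfolding sink_signature_def by auto
qed

lemma sink_eq_if_surj:
  assumes F: "F \<in> nonempty_faces" and v: "is_sink F Ori v"
  shows "sink F = v"
proof -
  obtain G where G: "G \<in> nonempty_faces" "sink G = v" "nbrs G v = nbrs F v"
    using sink_signature_surjD[OF is_sink_in_poly_vertices[OF face_of_if_nonempty_faces[OF F] v]
        nbrs_subset_in_nbrs_if_sink[OF v]] .
  have "v \<in> poly_vertices F" using v unfolding is_sink_def by blast
  moreover have "v \<in> poly_vertices G" using sink_in_poly_vertices[OF G(1)] G(2) by simp
  ultimately have "F = G"
    using face_of_eq_if_vertex_nbrs_eq[OF polytope face_of_if_nonempty_faces[OF F]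
        face_of_if_nonempty_faces[OF G(1)]] G(3) by simp
  then show ?thesis using G(2) by simp
qed

lemma affine_independent_sink_nbrs_if_surj:
  assumes F: "F face_of P" and v: "is_sink F Ori v"
  shows "\<not> affine_dependent (insert v (nbrs F v))"
proof
  assume "affine_dependent (insert v (nbrs F v))"
  then obtain u where u: "u \<in> nbrs F v" "u \<in> affine hull (insert v (nbrs F v - {u}))"
    using affine_dependent_insertE[OF _ vertex_notin_nbrs] by blast
  \<comment> \<open>the face realising the other neighbours spans u, hence contains u and the edge uv\<close>
  have "nbrs F v - {u} \<subseteq> in_nbrs v" using nbrs_subset_in_nbrs_if_sink[OF v] by blast
  then obtain G where G: "G \<in> nonempty_faces" "sink G = v" "nbrs G v = nbrs F v - {u}"
    using sink_signature_surjD[OF is_sink_in_poly_vertices[OF F v]] by blast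
  have GP: "G face_of P" using face_of_if_nonempty_faces[OF G(1)] .
  have vG: "v \<in> poly_vertices G" using sink_in_poly_vertices[OF G(1)] G(2) by simp
  have "affine hull G = affine hull (insert v (nbrs F v - {u}))"
    using affine_hull_vertex_nbrs[OF face_of_polytope_polytope[OF polytope GP] vG] G(3) by simp
  then have "u \<in> affine hull G" using u(2) by blast
  moreover have "poly_adj P u v" using u(1) poly_adj_face_of[OF F] by blast
  moreover have "v \<in> G" using vG poly_vertices_subset by blast
  ultimately have "poly_adj G u v"
    using poly_adj_face_of_if_in_affine_hull[OF polytope_imp_convex[OF polytope] GP] by blast
  then show False using G(3) by blast
qed

lemma in_edges_face_if_surj:
  assumes "v \<in> poly_vertices P"
  obtains F where "F face_of P" "is_sink F Ori v" "\<And>u. Ori u v \<Longrightarrow> convex hull {u, v} \<subseteq> F"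
proof -
  obtain G where G: "G \<in> nonempty_faces" "sink G = v" "nbrs G v = in_nbrs v"
    using sink_signature_surjD[OF assms] by blast
  have "convex hull {u, v} \<subseteq> G" if "Ori u v" for u
  proof -
    have "poly_adj G u v" using G(3) that unfolding in_nbrs_def by blast
    then have "{u, v} \<subseteq> G" using nbrs_subset poly_vertices_subset unfolding poly_adj_def by blast
    then show ?thesis
      using hull_minimal face_of_imp_convex[OF face_of_if_nonempty_faces[OF G(1)]] by blast
  qed
  then show thesis
    using that face_of_if_nonempty_faces[OF G(1)] is_sink_sink[OF G(1)] G(2) by blast
qed

end

lemma nbrs_eq_in_nbrs_if_contains_in_edges:
  assumes "F face_of P" "is_sink F Ori v" "\<And>u. Ori u v \<Longrightarrow> convex hull {u, v} \<subseteq> F"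
  shows "nbrs F v = in_nbrs v"
proof
  show "nbrs F v \<subseteq> in_nbrs v" using nbrs_subset_in_nbrs_if_sink[OF assms(2)] .
  show "in_nbrs v \<subseteq> nbrs F v"
  proof
    fix u assume u: "u \<in> in_nbrs v"
    then have "{u, v} \<subseteq> F"
      using assms(3) hull_subset[of "{u, v}" convex] unfolding in_nbrs_def by blast
    then show "u \<in> nbrs F v"
      using poly_adj_face_of[OF assms(1)] poly_adj_if_in_nbrs[OF u] by blast
  qed
qed

lemma surj_if_sink_conditions:
  assumes unique: "\<forall>F. F face_of P \<and> F \<noteq> {} \<longrightarrow> (\<exists>!v. is_sink F Ori v)"
    and simple: "\<forall>F. F face_of P \<and> F \<noteq> {} \<longrightarrow>
        (\<forall>v. is_sink F Ori v \<longrightarrow> int (degree_in F v) = aff_dim F)"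
    and in_edges: "\<forall>v\<in>poly_vertices P. \<exists>F. F face_of P \<and> is_sink F Ori v \<and>
        (\<forall>u. Ori u v \<longrightarrow> convex hull {u, v} \<subseteq> F)"
  shows "sink_signature ` nonempty_faces = signatures"
proof (rule subset_antisym[OF sink_signature_in_signatures], rule subsetI)
  fix p assume "p \<in> signatures"
  then obtain v S where p: "p = (v, S)" "v \<in> poly_vertices P" "S \<subseteq> in_nbrs v"
    unfolding signatures_def by blast
  obtain F where F: "F face_of P" "is_sink F Ori v" "\<And>u. Ori u v \<Longrightarrow> convex hull {u, v} \<subseteq> F"
    using in_edges p(2) by blast
  have vF: "v \<in> poly_vertices F" using F(2) unfolding is_sink_def by blast
  then have "F \<noteq> {}" using poly_vertices_subset by blast
  then have "int (card (nbrs F v)) = aff_dim F"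
    using simple F(1,2) unfolding degree_in_def by blast
  moreover have "S \<subseteq> nbrs F v" using p(3) nbrs_eq_in_nbrs_if_contains_in_edges[OF F] by simp
  ultimately obtain G where G: "G face_of F" "v \<in> G" "nbrs G v = S"
    using simple_vertex_face_with_nbrs face_of_polytope_polytope[OF polytope F(1)] vF by blast
  have GP: "G face_of P" using face_of_trans[OF G(1) F(1)] .
  have "is_sink G Ori v"
    using poly_vertices_face_of[OF G(1)] vF G p(3) unfolding is_sink_def in_nbrs_def by blast
  moreover have G_in: "G \<in> nonempty_faces" using GP G(2) unfolding nonempty_faces_def by blast
  ultimately have "sink G = v"
    using unique is_sink_sink[OF G_in] GP G(2) by blast
  then show "p \<in> sink_signature ` nonempty_faces"
    using G_in p(1) G(3) unfolding sink_signature_def by force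
qed

lemma fO_eq_card_nonempty_faces_iff_sink_conditions:
  "fO P Ori = card nonempty_faces \<longleftrightarrow>
    (\<forall>F. F face_of P \<and> F \<noteq> {} \<longrightarrow> (\<exists>!v. is_sink F Ori v)) \<and>
    (\<forall>F. F face_of P \<and> F \<noteq> {} \<longrightarrow>
        (\<forall>v. is_sink F Ori v \<longrightarrow> int (degree_in F v) = aff_dim F)) \<and>
    (\<forall>v\<in>poly_vertices P. \<exists>F. F face_of P \<and> is_sink F Ori v \<and>
        (\<forall>u. Ori u v \<longrightarrow> convex hull {u, v} \<subseteq> F))"
  (is "_ \<longleftrightarrow> ?unique \<and> ?simple \<and> ?in_edges")
proof
  assume "fO P Ori = card nonempty_faces"
  then have surj: "sink_signature ` nonempty_faces = signatures"
    using fO_eq_card_nonempty_faces_iff by blast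
  have ?unique
    using is_sink_sink sink_eq_if_surj[OF surj] unfolding nonempty_faces_def by blast
  moreover have ?simple
    using affine_independent_sink_nbrs_if_surj[OF surj] card_nbrs_eq_aff_dim_if_affine_independent
      face_of_polytope_polytope[OF polytope] unfolding degree_in_def is_sink_def by blast
  moreover have ?in_edges
    using in_edges_face_if_surj[OF surj] by metis
  ultimately show "?unique \<and> ?simple \<and> ?in_edges" by blast
next
  assume "?unique \<and> ?simple \<and> ?in_edges"
  then show "fO P Ori = card nonempty_faces"
    using surj_if_sink_conditions fO_eq_card_nonempty_faces_iff by blast
qed

end

theorem lemma2p11:
  fixes P :: "'a::euclidean_space set" and Ori :: "'a \<Rightarrow> 'a \<Rightarrow> bool" and d :: nat
  assumes "polytope P" and "aff_dim P = int d"
    and "is_orientation P Ori" and "acyclic_orientation Ori"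
  shows "fO P Ori = (\<Sum>i=0..d. f_num i P) \<longleftrightarrow>
    ((\<forall>F. F face_of P \<and> F \<noteq> {} \<longrightarrow> (\<exists>!v. is_sink F Ori v)) \<and>
     (\<forall>F. F face_of P \<and> F \<noteq> {} \<longrightarrow>
        (\<forall>v. is_sink F Ori v \<longrightarrow> int (degree_in F v) = aff_dim F)) \<and>
     (\<forall>v\<in>poly_vertices P. \<exists>F. F face_of P \<and> is_sink F Ori v \<and>
        (\<forall>u. Ori u v \<longrightarrow> convex hull {u, v} \<subseteq> F)))"
proof -
  interpret oriented_polytope P Ori
    using assms(1,3,4) by unfold_locales
  have "(\<Sum>i=0..d. f_num i P) = card nonempty_faces"
    using sum_f_num_eq_card_nonempty_faces[OF assms(1,2)] unfolding nonempty_faces_def .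
  then show ?thesis
    using fO_eq_card_nonempty_faces_iff_sink_conditions by simp
qed

end
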